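(* Let $w$ be a positive integer and let $x$ be an integer with $0\le x\le p-1$ and $x\notin\{1,p-1\}$. If $T_n(x)\equiv x\pmod{p^w}$, then $T'_n(x)\equiv n\pmod{p^w}$ or $T'_n(x)\equiv -n\pmod{p^w}$.
   Context: $p$ is a prime with $p>3$ and $n>1$ is an integer with $\gcd(n,p)=\gcd(n,p^2-1)=1$. $T_n(x)\in\mathbb{Z}[x]$ is the Chebyshev polynomial of the first kind: $T_0=1$, $T_1=x$, $T_d=2xT_{d-1}-T_{d-2}$; $T'_n$ is its derivative. *)

theory Defs
  imports "HOL-Computational_Algebra.Polynomial" "HOL-Number_Theory.Number_Theory"
begin

fun chebT :: "nat \<Rightarrow> int poly" where
  "chebT 0 = 1"
| "chebT (Suc 0) = [:0, 1:]"
| "chebT (Suc (Suc d)) = [:0, 2:] * chebT (Suc d) - chebT d"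

end

theory Submission
  imports Defs
begin

text \<open>With \<open>U\<close> the Chebyshev polynomial of the second kind, \<open>T\<^sub>n\<^sup>2 - (x\<^sup>2 - 1) U\<^sub>n\<^sub>-\<^sub>1\<^sup>2 = 1\<close>
  and \<open>T\<^sub>n' = n U\<^sub>n\<^sub>-\<^sub>1\<close>, hence \<open>(x\<^sup>2 - 1) T\<^sub>n'\<^sup>2 = n\<^sup>2 (T\<^sub>n\<^sup>2 - 1)\<close>. If \<open>T\<^sub>n(x) \<equiv> x\<close> modulo \<open>p\<^sup>w\<close>,
  this gives \<open>(x\<^sup>2 - 1)(T\<^sub>n' - n)(T\<^sub>n' + n) \<equiv> 0\<close>. The range condition on \<open>x\<close> makes
  \<open>x\<^sup>2 - 1\<close> a unit modulo \<open>p\<close>, and since \<open>p\<close> is odd and prime to \<open>n\<close>, it cannot divide both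
  \<open>T\<^sub>n' - n\<close> and \<open>T\<^sub>n' + n\<close>; so \<open>p\<^sup>w\<close> divides one of them.\<close>

definition polyX :: "int poly" where
  "polyX = [:0, 1:]"

text \<open>\<open>chebU n\<close> is \<open>U\<^sub>n\<^sub>-\<^sub>1\<close> in the usual indexing, with \<open>U\<^sub>-\<^sub>1 = 0\<close>.\<close>
fun chebU :: "nat \<Rightarrow> int poly" where
  "chebU 0 = 0"
| "chebU (Suc 0) = 1"
| "chebU (Suc (Suc d)) = 2 * polyX * chebU (Suc d) - chebU d"

lemma poly_polyX [simp]: "poly polyX x = x"
  by (simp add: polyX_def)

lemma pderiv_polyX [simp]: "pderiv polyX = 1"
  by (simp add: polyX_def pderiv_pCons)

lemma chebT_Suc_Suc': "chebT (Suc (Suc d)) = 2 * polyX * chebT (Suc d) - chebT d"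
  by (simp add: polyX_def numeral_poly)

lemma chebT_Suc: "chebT (Suc n) = polyX * chebT n + (polyX\<^sup>2 - 1) * chebU n"
  and chebU_Suc: "chebU (Suc n) = chebT n + polyX * chebU n"
proof (induction n rule: chebT.induct)
  case 1
  show "chebT (Suc 0) = polyX * chebT 0 + (polyX\<^sup>2 - 1) * chebU 0"
    and "chebU (Suc 0) = chebT 0 + polyX * chebU 0"
    by (simp_all add: polyX_def)
next
  case 2
  show "chebT (Suc (Suc 0)) = polyX * chebT (Suc 0) + (polyX\<^sup>2 - 1) * chebU (Suc 0)"
    and "chebU (Suc (Suc 0)) = chebT (Suc 0) + polyX * chebU (Suc 0)"
    by (simp_all only: chebT_Suc_Suc' chebU.simps chebT.simps(1,2) flip: polyX_def)
      (simp_all add: algebra_simps power2_eq_square)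
next
  case (3 d)
  then show "chebT (Suc (Suc (Suc d)))
      = polyX * chebT (Suc (Suc d)) + (polyX\<^sup>2 - 1) * chebU (Suc (Suc d))"
    and "chebU (Suc (Suc (Suc d))) = chebT (Suc (Suc d)) + polyX * chebU (Suc (Suc d))"
    by (simp_all only: chebT_Suc_Suc' chebU.simps) (simp_all add: algebra_simps power2_eq_square)
qed

lemma chebT_pell: "chebT n ^ 2 - (polyX\<^sup>2 - 1) * chebU n ^ 2 = 1"
proof (induction n)
  case (Suc n)
  then show ?case
    unfolding chebT_Suc chebU_Suc by (simp add: algebra_simps power2_eq_square)
qed simp

lemma pderiv_polyX_square_minus_one: "pderiv (polyX\<^sup>2 - 1) = 2 * polyX"
  by (simp add: pderiv_diff pderiv_mult power2_eq_square)

lemma pderiv_chebT_chebU: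
  "pderiv (chebT n) = of_nat n * chebU n \<and>
   (polyX\<^sup>2 - 1) * pderiv (chebU n) = of_nat n * chebT n - polyX * chebU n"
proof (induction n)
  case (Suc n)
  then have T': "pderiv (chebT n) = of_nat n * chebU n"
    and U': "(polyX\<^sup>2 - 1) * pderiv (chebU n) = of_nat n * chebT n - polyX * chebU n"
    by blast+
  have "pderiv (chebT (Suc n))
      = chebT n + polyX * pderiv (chebT n) + 2 * polyX * chebU n + (polyX\<^sup>2 - 1) * pderiv (chebU n)"
    unfolding chebT_Suc pderiv_add pderiv_mult pderiv_polyX_square_minus_one by simp
  also have "\<dots> = of_nat (Suc n) * chebU (Suc n)"
    unfolding T' U' chebU_Suc by (simp add: algebra_simps)
  finally have "pderiv (chebT (Suc n)) = of_nat (Suc n) * chebU (Suc n)" .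
  moreover have "(polyX\<^sup>2 - 1) * pderiv (chebU (Suc n))
      = (polyX\<^sup>2 - 1) * pderiv (chebT n) + (polyX\<^sup>2 - 1) * chebU n
        + polyX * ((polyX\<^sup>2 - 1) * pderiv (chebU n))"
    unfolding chebU_Suc pderiv_add pderiv_mult by (simp add: algebra_simps)
  moreover have "\<dots> = of_nat (Suc n) * chebT (Suc n) - polyX * chebU (Suc n)"
    unfolding T' U' chebT_Suc chebU_Suc by (simp add: algebra_simps)
  ultimately show ?case by simp
qed simp

lemma chebT_pderiv_square:
  "(polyX\<^sup>2 - 1) * pderiv (chebT n) ^ 2 = of_nat n ^ 2 * (chebT n ^ 2 - 1)"
proof -
  have "(polyX\<^sup>2 - 1) * pderiv (chebT n) ^ 2 = of_nat n ^ 2 * ((polyX\<^sup>2 - 1) * chebU n ^ 2)"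
    using pderiv_chebT_chebU[of n] by (simp add: power_mult_distrib)
  also have "(polyX\<^sup>2 - 1) * chebU n ^ 2 = chebT n ^ 2 - 1"
    using chebT_pell[of n] by (simp add: algebra_simps)
  finally show ?thesis .
qed

lemma prime_power_dvd_diff_or_add:
  fixes p a b :: int
  assumes "prime p" and "\<not> p dvd 2 * a" and "p ^ w dvd (b - a) * (b + a)"
  shows "p ^ w dvd b - a \<or> p ^ w dvd b + a"
proof -
  have "\<not> (p dvd b - a \<and> p dvd b + a)"
  proof
    assume "p dvd b - a \<and> p dvd b + a"
    then have "p dvd (b + a) - (b - a)"
      using dvd_diff by blast
    moreover have "(b + a) - (b - a) = 2 * a"
      by simp
    ultimately show False
      using assms(2) by simp
  qed
  then have "coprime (p ^ w) (b - a) \<or> coprime (p ^ w) (b + a)"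
    using assms(1) prime_imp_coprime coprime_power_left_iff by blast
  then show ?thesis
    using assms(3) coprime_dvd_mult_left_iff coprime_dvd_mult_right_iff by blast
qed

lemma prime_not_dvd_square_minus_one:
  fixes p x :: int
  assumes "prime p" and "0 \<le> x" and "x \<le> p - 1" and "x \<notin> {1, p - 1}"
  shows "\<not> p dvd x\<^sup>2 - 1"
proof -
  have small: "\<not> p dvd y" if "y \<noteq> 0" and "\<bar>y\<bar> < p" for y
    using that dvd_imp_le_int[of y p] by linarith
  have "p > 1"
    using assms(1) prime_gt_1_int by blast
  then have "\<not> p dvd x - 1" and "\<not> p dvd x + 1"
    using assms(2-4) by (intro small; auto)+
  moreover have "x\<^sup>2 - 1 = (x - 1) * (x + 1)"
    by (simp add: algebra_simps power2_eq_square)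
  ultimately show ?thesis
    using assms(1) prime_dvd_mult_iff by metis
qed

theorem lemma4:
  fixes p n w :: nat and x :: int
  assumes "prime p" and "p > 3" and "n > 1"
    and "gcd n p = 1" and "gcd n (p^2 - 1) = 1"
    and "w > 0"
    and "0 \<le> x" and "x \<le> int p - 1" and "x \<notin> {1, int p - 1}"
    and "[poly (chebT n) x = x] (mod (int p ^ w))"
  shows "[poly (pderiv (chebT n)) x = int n] (mod (int p ^ w)) \<or>
         [poly (pderiv (chebT n)) x = - int n] (mod (int p ^ w))"
proof -
  define t where "t = poly (chebT n) x"
  define d where "d = poly (pderiv (chebT n)) x"
  have prime_p: "prime (int p)"
    using assms(1) by simp
  have "(x\<^sup>2 - 1) * d\<^sup>2 = int n ^ 2 * (t\<^sup>2 - 1)"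
    using arg_cong[OF chebT_pderiv_square[of n], of "\<lambda>q. poly q x"] by (simp add: t_def d_def)
  then have factored: "(x\<^sup>2 - 1) * ((d - int n) * (d + int n)) = int n ^ 2 * ((t - x) * (t + x))"
    by (simp add: algebra_simps power2_eq_square)
  have "int p ^ w dvd t - x"
    using assms(10) by (simp add: cong_iff_dvd_diff t_def)
  then have "int p ^ w dvd (x\<^sup>2 - 1) * ((d - int n) * (d + int n))"
    unfolding factored by simp
  moreover have "coprime (int p ^ w) (x\<^sup>2 - 1)"
    using prime_not_dvd_square_minus_one[OF prime_p assms(7-9)] prime_p
    by (simp add: prime_imp_coprime)
  ultimately have "int p ^ w dvd (d - int n) * (d + int n)"
    by (simp add: coprime_dvd_mult_right_iff)
  moreover have "\<not> int p dvd 2 * int n"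
  proof -
    have "\<not> p dvd n"
      using assms(2,4) gcd_nat.absorb2[of p n] by auto
    moreover have "\<not> p dvd 2"
      using assms(2) by (auto dest: dvd_imp_le)
    ultimately have "\<not> p dvd 2 * n"
      using assms(1) prime_dvd_mult_iff by blast
    then show ?thesis
      using int_dvd_int_iff[of p "2 * n"] by simp
  qed
  ultimately have "int p ^ w dvd d - int n \<or> int p ^ w dvd d + int n"
    by (rule prime_power_dvd_diff_or_add[OF prime_p, rotated])
  then show ?thesis
    by (simp add: cong_iff_dvd_diff d_def)
qed

end
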